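(* There is a constant $C>0$ such that for every proper binary tree $\mathcal T$ with $n\ge2$ leaves (labeled as below), the matrix $\mathbf M_{\mathcal T}\in\mathrm{GL}(n,2)$ is a product of at most $C\log^2 n$ parallel row-elimination matrices. That is, the CNOT circuit $\mathbf M_{\mathcal T}$ can be parallelized to depth $O(\log^2 n)$ without ancillae.
   Context: $\mathsf R(i,j)=\mathbf I+\mathbf 1_{j,i}$ over $\mathbb F_2$, where $\mathbf 1_{j,i}$ is the matrix with a single $1$ in entry $(j,i)$. Left-multiplying by $\mathsf R(i,j)$ adds row $i$ to row $j$, i.e., it is a CNOT gate with control $i$ and target $j$. A parallel row-elimination matrix is $\mathbf I$ or $\mathbf I+\sum_{k=1}^t\mathbf 1_{j_k,i_k}$, where the $2t$ indices $i_k,j_k$ are pairwise distinct. CNOT tree: $\mathcal T$ is a proper binary tree (each internal node has exactly two children, a left child and a right child). Its $n$ leaves carry distinct labels from $[n]$, and each internal node carries a label in $\{L,R\}$. Each node $v$ receives a qubit index $i(v)$, and each internal node $v$ a matrix $\mathbf M_v$, as follows. Write $c_L,c_R$ for the left and right children of $v$. - If $v$ is a leaf, $i(v)$ is its label. - If $v$ is internal with label $L$, then $i(v)=i(c_L)$ and $\mathbf M_v=\mathsf R(i(c_R),i(c_L))$. - If $v$ is internal with label $R$, then $i(v)=i(c_R)$ and $\mathbf M_v=\mathsf R(i(c_L),i(c_R))$. If $v_1,\dots,v_{n-1}$ are the internal nodes listed in postorder, then $\mathbf M_{\mathcal T}=\mathbf M_{v_{n-1}}\cdots\mathbf M_{v_2}\mathbf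 M_{v_1}$. *)

theory Defs
  imports "Jordan_Normal_Form.Matrix" "HOL-Library.Z2" Complex_Main
begin

text \<open>Matrices over F_2 are n x n matrices of type bit mat (HOL-Library.Z2).
  Qubit indices are taken from [n] = {1..n}; qubit i corresponds to row/column i-1.\<close>

definition unit_entry :: "nat \<Rightarrow> nat \<Rightarrow> nat \<Rightarrow> bit mat" where
  "unit_entry n j i = mat n n (\<lambda>(r, c). if r = j - 1 \<and> c = i - 1 then 1 else 0)"

text \<open>R(i,j) = I + 1_{j,i}: CNOT with control i and target j.\<close>
definition rowelim :: "nat \<Rightarrow> nat \<Rightarrow> nat \<Rightarrow> bit mat" where
  "rowelim n i j = 1\<^sub>m n + unit_entry n j i"

definition par_elim :: "nat \<Rightarrow> bit mat \<Rightarrow> bool" where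
  "par_elim n M \<longleftrightarrow> (\<exists>ps :: (nat \<times> nat) list.
     distinct (map fst ps @ map snd ps) \<and>
     (\<forall>(i, j) \<in> set ps. i \<in> {1..n} \<and> j \<in> {1..n}) \<and>
     M = foldr (\<lambda>(i, j) A. unit_entry n j i + A) ps (1\<^sub>m n))"

datatype lr = L | R

datatype ctree = Leaf nat | Node lr ctree ctree

fun leaves :: "ctree \<Rightarrow> nat list" where
  "leaves (Leaf a) = [a]"
| "leaves (Node _ l r) = leaves l @ leaves r"

fun qidx :: "ctree \<Rightarrow> nat" where
  "qidx (Leaf a) = a"
| "qidx (Node L l r) = qidx l"
| "qidx (Node R l r) = qidx r"

fun node_mat :: "nat \<Rightarrow> lr \<Rightarrow> ctree \<Rightarrow> ctree \<Rightarrow> bit mat" where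
  "node_mat n L l r = rowelim n (qidx r) (qidx l)"
| "node_mat n R l r = rowelim n (qidx l) (qidx r)"

text \<open>M_T = M_{v_{n-1}} ... M_{v_1} with internal nodes in postorder
  (left subtree, right subtree, node).\<close>
fun tree_mat :: "nat \<Rightarrow> ctree \<Rightarrow> bit mat" where
  "tree_mat n (Leaf a) = 1\<^sub>m n"
| "tree_mat n (Node b l r) = node_mat n b l r * (tree_mat n r * tree_mat n l)"

definition cnot_tree :: "nat \<Rightarrow> ctree \<Rightarrow> bool" where
  "cnot_tree n T \<longleftrightarrow> length (leaves T) = n \<and> distinct (leaves T) \<and> set (leaves T) \<subseteq> {1..n}"

end

theory Submission
  imports Defs "HOL-Library.Log_Nat"
begin

text \<open>A CNOT circuit is determined by its action on F_2-valued functions of the qubits, and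
  gates on pairwise distinct qubits multiply to a parallel row-elimination matrix.

  Let n \<le> 2k and let u be the lowest subtree with more than k leaves, so both children of u
  have at most k leaves. The circuit of u has the same effect as first adding to its qubit
  q = i(u) the parity of the leaves of the subtrees hanging off the path from u down to the
  leaf q, and then running those hanging subtrees. The parity is accumulated in O(log n)
  layers: add neighbours in pairs, recurse on the half that received the sums, and undo the
  pairing. What remains, the hanging subtrees together with the tree in which u is contracted
  to the leaf q, are trees with at most k leaves on pairwise disjoint qubits; scheduling them
  side by side recursively gives depth D(2k) \<le> D(k) + O(log k), hence D(n) = O((log n)^2).\<close>

declare add_bit_eq_xor [simp del] mult_bit_eq_and [simp del]

section \<open>Circuits of CNOT gates\<close>

fun cnot :: "nat \<times> nat \<Rightarrow> (nat \<Rightarrow> bit) \<Rightarrow> nat \<Rightarrow> bit" where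
  "cnot (i, j) x = x(j := x j + x i)"

fun apply_circ :: "(nat \<times> nat) list \<Rightarrow> (nat \<Rightarrow> bit) \<Rightarrow> nat \<Rightarrow> bit" where
  "apply_circ [] x = x"
| "apply_circ (a # g) x = cnot a (apply_circ g x)"

definition support :: "(nat \<times> nat) list \<Rightarrow> nat set" where
  "support g = fst ` set g \<union> snd ` set g"

lemma support_Nil [simp]: "support [] = {}"
  and support_Cons [simp]: "support (a # g) = {fst a, snd a} \<union> support g"
  and support_append [simp]: "support (g @ h) = support g \<union> support h"
  by (auto simp: support_def)

lemma support_concat: "support (concat gs) = (\<Union>g \<in> set gs. support g)"
  by (induction gs) auto

lemma apply_circ_append [simp]: "apply_circ (g @ h) x = apply_circ g (apply_circ h x)"
  by (induction g) auto

lemma apply_circ_comp: "apply_circ (g @ h) = apply_circ g \<circ> apply_circ h"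
  by (simp add: fun_eq_iff)

lemma add_self_bit [simp]: "(y :: bit) + y = 0"
  by (cases y) simp_all

lemma cnot_involution: "i \<noteq> j \<Longrightarrow> cnot (i, j) (cnot (i, j) x) = x"
  by (simp add: fun_eq_iff add.assoc)

lemma apply_circ_outside: "q \<notin> support g \<Longrightarrow> apply_circ g x q = x q"
  by (induction g) auto

lemma apply_circ_upd:
  "q \<notin> support g \<Longrightarrow> apply_circ g (x(q := v)) = (apply_circ g x)(q := v)"
proof (induction g)
  case (Cons a g)
  then show ?case by (cases a) (auto simp: fun_eq_iff)
qed simp

lemma cnot_apply_circ_commute:
  assumes "i \<notin> support g" "j \<notin> support g"
  shows "cnot (i, j) (apply_circ g x) = apply_circ g (cnot (i, j) x)"
  by (simp only: cnot.simps apply_circ_upd[OF assms(2)] apply_circ_outside[OF assms(1)]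
      apply_circ_outside[OF assms(2)])

lemma apply_circ_commute:
  "support g \<inter> support h = {} \<Longrightarrow> apply_circ g (apply_circ h x) = apply_circ h (apply_circ g x)"
proof (induction g arbitrary: x)
  case (Cons a g)
  obtain i j where a: "a = (i, j)" by force
  with Cons show ?case by (simp add: cnot_apply_circ_commute del: cnot.simps)
qed simp

section \<open>Matrices of circuits\<close>

definition circ_mat :: "nat \<Rightarrow> (nat \<times> nat) list \<Rightarrow> bit mat" where
  "circ_mat n g = foldr (*) (map (\<lambda>(i, j). rowelim n i j) g) (1\<^sub>m n)"

definition state_vec :: "nat \<Rightarrow> (nat \<Rightarrow> bit) \<Rightarrow> bit vec" where
  "state_vec n x = vec n (\<lambda>r. x (Suc r))"

lemma state_vec_carrier [simp]: "state_vec n x \<in> carrier_vec n"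
  by (simp add: state_vec_def)

lemma index_state_vec [simp]: "r < n \<Longrightarrow> state_vec n x $ r = x (Suc r)"
  by (simp add: state_vec_def)

lemma state_vec_add: "state_vec n x + state_vec n y = state_vec n (\<lambda>k. x k + y k)"
  by (auto simp: state_vec_def)

lemma circ_mat_Cons: "circ_mat n ((i, j) # g) = rowelim n i j * circ_mat n g"
  by (simp add: circ_mat_def)

lemma unit_entry_carrier [simp]: "unit_entry n j i \<in> carrier_mat n n"
  by (simp add: unit_entry_def)

lemma rowelim_carrier [simp]: "rowelim n i j \<in> carrier_mat n n"
  by (simp add: rowelim_def)

lemma circ_mat_carrier [simp]: "circ_mat n g \<in> carrier_mat n n"
  by (induction g) (auto simp: circ_mat_def intro!: mult_carrier_mat[of _ n n _ n])

lemma circ_mat_append: "circ_mat n (g @ h) = circ_mat n g * circ_mat n h"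
proof (induction g)
  case Nil
  show ?case using left_mult_one_mat[OF circ_mat_carrier, of n h] by (simp add: circ_mat_def)
next
  case (Cons a g)
  obtain i j where a: "a = (i, j)" by force
  from Cons show ?case
    by (simp add: a circ_mat_Cons assoc_mult_mat[of _ n n _ n _ n])
qed

lemma circ_mat_concat: "circ_mat n (concat gs) = foldr (*) (map (circ_mat n) gs) (1\<^sub>m n)"
proof (induction gs)
  case Nil
  show ?case by (simp add: circ_mat_def)
next
  case (Cons g gs)
  then show ?case by (simp add: circ_mat_append)
qed

lemma unit_entry_mult_state_vec:
  assumes "i \<in> {1..n}" "j \<in> {1..n}"
  shows "unit_entry n j i *\<^sub>v state_vec n x = state_vec n ((\<lambda>_. 0)(j := x i))"
proof (rule eq_vecI)
  fix r assume "r < dim_vec (state_vec n ((\<lambda>_. 0)(j := x i)))"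
  then have r: "r < n" by (simp add: state_vec_def)
  have "row (unit_entry n j i) r = (if Suc r = j then unit_vec n (i - 1) else 0\<^sub>v n)"
    using r assms by (intro eq_vecI) (auto simp: unit_entry_def)
  moreover have "i - 1 < n" "Suc (i - 1) = i" using assms by auto
  ultimately show "(unit_entry n j i *\<^sub>v state_vec n x) $ r = state_vec n ((\<lambda>_. 0)(j := x i)) $ r"
    using r by (simp add: unit_entry_def state_vec_def[of n x])
qed (simp add: unit_entry_def state_vec_def)

lemma rowelim_mult_state_vec:
  assumes "i \<in> {1..n}" "j \<in> {1..n}"
  shows "rowelim n i j *\<^sub>v state_vec n x = state_vec n (cnot (i, j) x)"
proof -
  have "rowelim n i j *\<^sub>v state_vec n x = state_vec n x + unit_entry n j i *\<^sub>v state_vec n x"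
    unfolding rowelim_def
    by (subst add_mult_distrib_mat_vec[of _ n n]) auto
  also have "\<dots> = state_vec n (cnot (i, j) x)"
    using assms by (simp add: unit_entry_mult_state_vec) (auto simp: state_vec_def)
  finally show ?thesis .
qed

lemma circ_mat_mult_state_vec:
  "support g \<subseteq> {1..n} \<Longrightarrow> circ_mat n g *\<^sub>v state_vec n x = state_vec n (apply_circ g x)"
proof (induction g)
  case Nil
  show ?case by (simp add: circ_mat_def state_vec_def)
next
  case (Cons a g)
  obtain i j where a: "a = (i, j)" by force
  from Cons a show ?case
    by (simp add: circ_mat_Cons rowelim_mult_state_vec assoc_mult_mat_vec[of _ n n _ n]
        del: cnot.simps)
qed

lemma mat_eqI_state_vec:
  assumes "A \<in> carrier_mat n n" "B \<in> carrier_mat n n"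
    and "\<And>x. A *\<^sub>v state_vec n x = B *\<^sub>v state_vec n x"
  shows "A = B"
proof (rule eq_matI)
  fix r c assume "r < dim_row B" "c < dim_col B"
  with assms have rc: "r < n" "c < n" by auto
  have "unit_vec n c = state_vec n (\<lambda>k. unit_vec n c $ (k - 1))"
    by (auto simp: state_vec_def)
  then have "A *\<^sub>v unit_vec n c = B *\<^sub>v unit_vec n c" by (metis assms(3))
  moreover have "A $$ (r, c) = (A *\<^sub>v unit_vec n c) $ r" "B $$ (r, c) = (B *\<^sub>v unit_vec n c) $ r"
    using rc assms(1,2) by auto
  ultimately show "A $$ (r, c) = B $$ (r, c)" by simp
qed (use assms in auto)

lemma circ_mat_eqI:
  "support g \<subseteq> {1..n} \<Longrightarrow> support h \<subseteq> {1..n} \<Longrightarrow> apply_circ g = apply_circ h \<Longrightarrow>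
   circ_mat n g = circ_mat n h"
  by (rule mat_eqI_state_vec[of _ n]) (simp_all add: circ_mat_mult_state_vec)

definition layer :: "nat set \<Rightarrow> (nat \<times> nat) list \<Rightarrow> bool" where
  "layer S Y \<longleftrightarrow> distinct (map fst Y @ map snd Y) \<and> support Y \<subseteq> S"

lemma layer_Cons:
  "layer S ((i, j) # Y) \<longleftrightarrow> i \<noteq> j \<and> i \<notin> support Y \<and> j \<notin> support Y \<and> {i, j} \<subseteq> S \<and> layer S Y"
  by (auto simp: layer_def support_def)

lemma layer_mono: "layer S Y \<Longrightarrow> S \<subseteq> S' \<Longrightarrow> layer S' Y"
  by (auto simp: layer_def)

lemma par_elim_circ_mat:
  assumes "layer {1..n} Y"
  shows "par_elim n (circ_mat n Y)"
proof -
  let ?sum = "\<lambda>Y. foldr (\<lambda>(i, j) A. unit_entry n j i + A) Y (1\<^sub>m n)"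
  have carrier: "?sum Y \<in> carrier_mat n n" for Y
    by (induction Y) auto
  have "?sum Y *\<^sub>v state_vec n x = state_vec n (apply_circ Y x)" for x
    using assms
  proof (induction Y)
    case Nil
    show ?case by simp
  next
    case (Cons a Y)
    obtain i j where a: "a = (i, j)" by force
    with Cons.prems have ij: "i \<in> {1..n}" "j \<in> {1..n}" "i \<notin> support Y" and "layer {1..n} Y"
      by (auto simp: layer_Cons)
    with Cons.IH have "?sum (a # Y) *\<^sub>v state_vec n x
        = state_vec n ((\<lambda>_. 0)(j := x i)) + state_vec n (apply_circ Y x)"
      by (simp add: a add_mult_distrib_mat_vec[OF _ carrier] unit_entry_mult_state_vec)
    also have "\<dots> = state_vec n (apply_circ (a # Y) x)"
      using ij(3)
      by (auto simp: a state_vec_add apply_circ_outside intro!: arg_cong[where f = "state_vec n"])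
    finally show ?case .
  qed
  then have "?sum Y = circ_mat n Y"
    using assms by (intro mat_eqI_state_vec[OF carrier circ_mat_carrier])
      (simp add: circ_mat_mult_state_vec layer_def)
  then show ?thesis
    using assms unfolding par_elim_def layer_def support_def by (intro exI[of _ Y]) auto
qed

section \<open>Layered schedules\<close>

definition schedule :: "nat set \<Rightarrow> (nat \<times> nat) list list \<Rightarrow> (nat \<times> nat) list \<Rightarrow> bool" where
  "schedule S Ls g \<longleftrightarrow> apply_circ (concat Ls) = apply_circ g \<and> (\<forall>Y \<in> set Ls. layer S Y)"

lemma schedule_mono: "schedule S Ls g \<Longrightarrow> S \<subseteq> S' \<Longrightarrow> schedule S' Ls g"
  by (auto simp: schedule_def intro: layer_mono)

lemma schedule_append:
  "schedule S L1 g1 \<Longrightarrow> schedule S L2 g2 \<Longrightarrow> schedule S (L1 @ L2) (g1 @ g2)"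
  by (auto simp: schedule_def apply_circ_comp)

lemma schedule_par_elim_factorization:
  assumes "schedule {1..n} Ls g" "support g \<subseteq> {1..n}"
  shows "circ_mat n g = foldr (*) (map (circ_mat n) Ls) (1\<^sub>m n)"
    and "\<forall>M \<in> set (map (circ_mat n) Ls). par_elim n M"
proof -
  have "support (concat Ls) \<subseteq> {1..n}"
    using assms(1) by (auto simp: schedule_def layer_def support_concat)
  with assms have "circ_mat n g = circ_mat n (concat Ls)"
    by (intro circ_mat_eqI) (auto simp: schedule_def)
  then show "circ_mat n g = foldr (*) (map (circ_mat n) Ls) (1\<^sub>m n)"
    by (simp add: circ_mat_concat)
  show "\<forall>M \<in> set (map (circ_mat n) Ls). par_elim n M"
    using assms(1) by (auto simp: schedule_def intro: par_elim_circ_mat)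
qed

fun merge_layers :: "'a list list \<Rightarrow> 'a list list \<Rightarrow> 'a list list" where
  "merge_layers (Y # Ys) (Z # Zs) = (Y @ Z) # merge_layers Ys Zs"
| "merge_layers [] Zs = Zs"
| "merge_layers Ys [] = Ys"

lemma length_merge_layers: "length (merge_layers Ys Zs) = max (length Ys) (length Zs)"
  by (induction Ys Zs rule: merge_layers.induct) auto

lemma layer_append:
  assumes "layer S1 Y" "layer S2 Z" "S1 \<inter> S2 = {}"
  shows "layer (S1 \<union> S2) (Y @ Z)"
proof -
  have sets: "set (map fst Y @ map snd Y) = support Y" "set (map fst Z @ map snd Z) = support Z"
    by (auto simp: support_def)
  have "support Y \<inter> support Z = {}" using assms by (auto simp: layer_def)
  with assms have "distinct ((map fst Y @ map snd Y) @ (map fst Z @ map snd Z))"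
    unfolding distinct_append[of "map fst Y @ map snd Y"] sets layer_def by blast
  moreover have "mset (map fst (Y @ Z) @ map snd (Y @ Z)) =
      mset ((map fst Y @ map snd Y) @ (map fst Z @ map snd Z))"
    by simp
  ultimately have "distinct (map fst (Y @ Z) @ map snd (Y @ Z))"
    using mset_eq_imp_distinct_iff by blast
  moreover have "support (Y @ Z) \<subseteq> S1 \<union> S2" using assms by (auto simp: layer_def)
  ultimately show ?thesis unfolding layer_def by blast
qed

lemma layer_merge_layers:
  "\<forall>Y \<in> set Ys. layer S1 Y \<Longrightarrow> \<forall>Z \<in> set Zs. layer S2 Z \<Longrightarrow> S1 \<inter> S2 = {} \<Longrightarrow>
   Y \<in> set (merge_layers Ys Zs) \<Longrightarrow> layer (S1 \<union> S2) Y"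
  by (induction Ys Zs rule: merge_layers.induct) (auto intro: layer_append layer_mono)

lemma apply_circ_merge_layers:
  "\<forall>Y \<in> set Ys. support Y \<subseteq> S1 \<Longrightarrow> \<forall>Z \<in> set Zs. support Z \<subseteq> S2 \<Longrightarrow> S1 \<inter> S2 = {} \<Longrightarrow>
   apply_circ (concat (merge_layers Ys Zs)) x = apply_circ (concat Ys) (apply_circ (concat Zs) x)"
proof (induction Ys Zs arbitrary: x rule: merge_layers.induct)
  case (1 Y Ys Z Zs)
  from "1.prems" have "support Z \<inter> support (concat Ys) = {}"
    unfolding support_concat by fastforce
  with 1 show ?case by (simp add: apply_circ_commute[of Z])
qed auto

lemma schedule_merge_layers:
  assumes "schedule S1 Ys g" "schedule S2 Zs h" "S1 \<inter> S2 = {}"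
  shows "schedule (S1 \<union> S2) (merge_layers Ys Zs) (g @ h)"
proof -
  have "\<forall>Y \<in> set Ys. support Y \<subseteq> S1" "\<forall>Z \<in> set Zs. support Z \<subseteq> S2"
    using assms by (auto simp: schedule_def layer_def)
  then have "apply_circ (concat (merge_layers Ys Zs)) =
      apply_circ (concat Ys) \<circ> apply_circ (concat Zs)"
    using assms(3) by (simp add: fun_eq_iff apply_circ_merge_layers)
  with assms show ?thesis
    unfolding schedule_def by (auto simp: apply_circ_comp intro: layer_merge_layers)
qed

section \<open>Logarithmic-depth fan-in\<close>

definition fanin :: "nat \<Rightarrow> nat list \<Rightarrow> (nat \<times> nat) list" where
  "fanin t A = map (\<lambda>a. (a, t)) A"

lemma apply_circ_fanin:
  "t \<notin> set A \<Longrightarrow> apply_circ (fanin t A) x = x(t := x t + sum_list (map x A))"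
  by (induction A) (auto simp: fanin_def add.commute add.left_commute)

fun pair_gates :: "nat list \<Rightarrow> (nat \<times> nat) list" where
  "pair_gates (a # b # A) = (b, a) # pair_gates A"
| "pair_gates _ = []"

fun pair_targets :: "nat list \<Rightarrow> nat list" where
  "pair_targets (a # b # A) = a # pair_targets A"
| "pair_targets A = A"

lemma support_pair_gates: "support (pair_gates A) \<subseteq> set A"
  by (induction A rule: pair_gates.induct) auto

lemma set_pair_targets: "set (pair_targets A) \<subseteq> set A"
  by (induction A rule: pair_targets.induct) auto

lemma distinct_pair_targets: "distinct A \<Longrightarrow> distinct (pair_targets A)"
  by (induction A rule: pair_targets.induct) (use set_pair_targets in auto)

lemma length_pair_targets: "length (pair_targets A) = (length A + 1) div 2"
  by (induction A rule: pair_targets.induct) auto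

lemma layer_pair_gates: "distinct A \<Longrightarrow> layer (set A) (pair_gates A)"
proof (induction A rule: pair_gates.induct)
  case (1 a b A)
  then show ?case using support_pair_gates[of A] by (auto simp: layer_Cons intro: layer_mono)
qed (auto simp: layer_def)

lemma sum_pair_targets:
  "distinct A \<Longrightarrow> sum_list (map (apply_circ (pair_gates A) x) (pair_targets A)) = sum_list (map x A)"
proof (induction A rule: pair_gates.induct)
  case (1 a b A)
  define y where "y = apply_circ (pair_gates A) x"
  have "a \<notin> support (pair_gates A)" "b \<notin> support (pair_gates A)" "a \<notin> set (pair_targets A)"
    using "1.prems" support_pair_gates[of A] set_pair_targets[of A] by auto
  then have upd: "apply_circ (pair_gates (a # b # A)) x = y(a := x a + x b)"
    by (simp add: y_def apply_circ_outside)
  have "sum_list (map (apply_circ (pair_gates (a # b # A)) x) (pair_targets (a # b # A))) =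
      x a + x b + sum_list (map y (pair_targets A))"
    unfolding upd using \<open>a \<notin> set (pair_targets A)\<close> by (simp add: map_fun_upd)
  also have "\<dots> = sum_list (map x (a # b # A))"
    using 1 by (simp add: y_def add.assoc)
  finally show ?case .
qed auto

lemma pair_gates_involution:
  "distinct A \<Longrightarrow> apply_circ (pair_gates A) (apply_circ (pair_gates A) x) = x"
proof (induction A arbitrary: x rule: pair_gates.induct)
  case (1 a b A)
  then have "b \<notin> support (pair_gates A)" "a \<notin> support (pair_gates A)" "b \<noteq> a"
    using support_pair_gates[of A] by auto
  with 1 show ?case by (simp add: cnot_apply_circ_commute cnot_involution del: cnot.simps)
qed auto

text \<open>The pairing layer adds each second element of A onto its predecessor, after which the
  targets carry the same total parity; recursing on them and undoing the pairing (an
  involution) adds the parity of A to t in about 2 log |A| layers.\<close>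

function fanin_layers :: "nat \<Rightarrow> nat list \<Rightarrow> (nat \<times> nat) list list" where
  "fanin_layers t [] = []"
| "fanin_layers t [a] = [[(a, t)]]"
| "fanin_layers t (a # b # A) =
     [pair_gates (a # b # A)] @ fanin_layers t (pair_targets (a # b # A)) @
       [pair_gates (a # b # A)]"
  by pat_completeness auto
termination
  by (relation "measure (\<lambda>(t, A). length A)") (auto simp: length_pair_targets)

lemma apply_circ_fanin_layers:
  "distinct A \<Longrightarrow> t \<notin> set A \<Longrightarrow>
   apply_circ (concat (fanin_layers t A)) x = x(t := x t + sum_list (map x A))"
proof (induction t A arbitrary: x rule: fanin_layers.induct)
  case (3 t a b A)
  let ?A = "a # b # A"
  let ?P = "pair_gates ?A"
  have tP: "t \<notin> support ?P" using "3.prems" support_pair_gates[of ?A] by blast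
  have "distinct (pair_targets ?A)" "t \<notin> set (pair_targets ?A)"
    using distinct_pair_targets[OF "3.prems"(1)] set_pair_targets[of ?A] "3.prems"(2) by blast+
  note IH = "3.IH"[OF this]
  have "apply_circ (concat (fanin_layers t ?A)) x =
      apply_circ ?P ((apply_circ ?P x)(t := apply_circ ?P x t +
        sum_list (map (apply_circ ?P x) (pair_targets ?A))))"
    by (simp only: fanin_layers.simps concat_append apply_circ_append concat.simps append_Nil2 IH)
  also have "\<dots> = x(t := x t + sum_list (map x ?A))"
    by (simp only: apply_circ_upd[OF tP] apply_circ_outside[OF tP] sum_pair_targets[OF "3.prems"(1)]
        pair_gates_involution[OF "3.prems"(1)])
  finally show ?case .
qed (simp_all add: add.commute)

lemma layer_fanin_layers:
  "distinct A \<Longrightarrow> t \<notin> set A \<Longrightarrow> Y \<in> set (fanin_layers t A) \<Longrightarrow> layer (insert t (set A)) Y"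
proof (induction t A rule: fanin_layers.induct)
  case (2 t a)
  then show ?case by (auto simp: layer_def)
next
  case (3 t a b A)
  let ?A = "a # b # A"
  have "distinct (pair_targets ?A)" "t \<notin> set (pair_targets ?A)"
    and sub: "insert t (set (pair_targets ?A)) \<subseteq> insert t (set ?A)"
    using distinct_pair_targets[OF "3.prems"(1)] set_pair_targets[of ?A] "3.prems"(2) by blast+
  with "3.IH" "3.prems" layer_pair_gates[OF "3.prems"(1)] show ?case
    by (auto simp del: pair_gates.simps pair_targets.simps intro: layer_mono)
qed simp

lemma length_fanin_layers: "length A \<le> 2 ^ p \<Longrightarrow> length (fanin_layers t A) \<le> 2 * p + 1"
proof (induction t A arbitrary: p rule: fanin_layers.induct)
  case (3 t a b A)
  then obtain p' where p: "p = Suc p'" by (cases p) auto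
  with "3.prems" have "length (pair_targets (a # b # A)) \<le> 2 ^ p'"
    by (simp add: length_pair_targets)
  with "3.IH" p show ?case by (simp del: pair_gates.simps pair_targets.simps)
qed auto

lemma schedule_fanin_layers:
  "distinct A \<Longrightarrow> t \<notin> set A \<Longrightarrow> schedule (insert t (set A)) (fanin_layers t A) (fanin t A)"
  by (auto simp: schedule_def apply_circ_fanin_layers apply_circ_fanin layer_fanin_layers)

section \<open>The circuit of a tree\<close>

fun main_child :: "lr \<Rightarrow> ctree \<Rightarrow> ctree \<Rightarrow> ctree" where
  "main_child L l r = l"
| "main_child R l r = r"

fun side_child :: "lr \<Rightarrow> ctree \<Rightarrow> ctree \<Rightarrow> ctree" where
  "side_child L l r = r"
| "side_child R l r = l"

lemma children_Node: "{main_child b l r, side_child b l r} = {l, r}"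
  by (cases b) auto

lemma qidx_Node: "qidx (Node b l r) = qidx (main_child b l r)"
  by (cases b) auto

lemma distinct_leaves_Node:
  "distinct (leaves (Node b l r)) \<longleftrightarrow> distinct (leaves (main_child b l r)) \<and>
     distinct (leaves (side_child b l r)) \<and>
     set (leaves (main_child b l r)) \<inter> set (leaves (side_child b l r)) = {}"
  by (cases b) auto

lemma mset_leaves_Node:
  "mset (leaves (Node b l r)) = mset (leaves (main_child b l r)) + mset (leaves (side_child b l r))"
  by (cases b) auto

fun tree_circ :: "ctree \<Rightarrow> (nat \<times> nat) list" where
  "tree_circ (Leaf a) = []"
| "tree_circ (Node b l r) =
     (qidx (side_child b l r), qidx (main_child b l r)) # tree_circ r @ tree_circ l"

lemma tree_mat_eq_circ_mat: "tree_mat n T = circ_mat n (tree_circ T)"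
proof (induction T)
  case (Leaf a)
  show ?case by (simp add: circ_mat_def)
next
  case (Node b l r)
  then show ?case by (cases b) (simp_all add: circ_mat_Cons circ_mat_append)
qed

lemma length_leaves_pos: "0 < length (leaves T)"
  by (induction T) auto

lemma qidx_in_leaves: "qidx T \<in> set (leaves T)"
proof (induction T)
  case (Node b l r)
  then show ?case by (cases b) auto
qed simp

lemma support_tree_circ: "support (tree_circ T) \<subseteq> set (leaves T)"
proof (induction T)
  case (Node b l r)
  then show ?case using qidx_in_leaves[of l] qidx_in_leaves[of r] by (cases b) auto
qed simp

lemma apply_circ_tree_circ_Node:
  assumes "distinct (leaves (Node b l r))"
  shows "apply_circ (tree_circ (Node b l r)) x =
    cnot (qidx (side_child b l r), qidx (main_child b l r))
      (apply_circ (tree_circ (side_child b l r)) (apply_circ (tree_circ (main_child b l r)) x))"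
proof (cases b)
  case R
  have "support (tree_circ r) \<inter> support (tree_circ l) = {}"
    using assms support_tree_circ[of l] support_tree_circ[of r] by auto
  with R show ?thesis by (simp add: apply_circ_commute del: cnot.simps)
qed (simp del: cnot.simps)

lemma apply_circ_tree_circ_qidx:
  "distinct (leaves T) \<Longrightarrow> apply_circ (tree_circ T) x (qidx T) = sum_list (map x (leaves T))"
proof (induction T arbitrary: x)
  case (Leaf a)
  show ?case by simp
next
  case (Node b l r)
  let ?c = "main_child b l r" and ?s = "side_child b l r"
  have IH: "apply_circ (tree_circ t) y (qidx t) = sum_list (map y (leaves t))"
    if "t \<in> {?c, ?s}" for t y
    using Node that children_Node[of b l r] distinct_leaves_Node[of b l r] by auto
  have disj: "set (leaves ?c) \<inter> set (leaves ?s) = {}"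
    using Node.prems distinct_leaves_Node by blast
  have c_out: "qidx ?c \<notin> support (tree_circ ?s)"
    using qidx_in_leaves[of ?c] support_tree_circ[of ?s] disj by auto
  have s_leaves: "map (apply_circ (tree_circ ?c) x) (leaves ?s) = map x (leaves ?s)"
    using support_tree_circ[of ?c] disj by (auto intro!: apply_circ_outside)
  have "apply_circ (tree_circ (Node b l r)) x (qidx (Node b l r))
      = apply_circ (tree_circ ?c) x (qidx ?c) +
        apply_circ (tree_circ ?s) (apply_circ (tree_circ ?c) x) (qidx ?s)"
    unfolding apply_circ_tree_circ_Node[OF Node.prems] qidx_Node
    using c_out by (simp add: apply_circ_outside)
  also have "\<dots> = sum_list (map x (leaves ?c)) + sum_list (map x (leaves ?s))"
    by (simp add: IH s_leaves)
  also have "\<dots> = sum_list (map x (leaves (Node b l r)))"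
    by (cases b) (simp_all add: add.commute)
  finally show ?case .
qed

text \<open>spine U lists the subtrees hanging off the path from U down to the leaf qidx U.\<close>

fun spine :: "ctree \<Rightarrow> ctree list" where
  "spine (Leaf a) = []"
| "spine (Node L l r) = r # spine l"
| "spine (Node R l r) = l # spine r"

definition spine_leaves :: "ctree \<Rightarrow> nat list" where
  "spine_leaves U = concat (map leaves (spine U))"

lemma spine_Node: "spine (Node b l r) = side_child b l r # spine (main_child b l r)"
  by (cases b) auto

lemma spine_leaves_Leaf [simp]: "spine_leaves (Leaf a) = []"
  by (simp add: spine_leaves_def)

lemma spine_leaves_Node:
  "spine_leaves (Node b l r) = leaves (side_child b l r) @ spine_leaves (main_child b l r)"
  by (simp add: spine_leaves_def spine_Node)

lemma mset_leaves_spine: "mset (leaves U) = mset (qidx U # spine_leaves U)"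
proof (induction U)
  case (Node b l r)
  then show ?case
    by (cases b) (auto simp: mset_leaves_Node qidx_Node spine_leaves_Node)
qed simp

lemma distinct_qidx_spine_leaves: "distinct (leaves U) \<Longrightarrow> distinct (qidx U # spine_leaves U)"
  using mset_eq_imp_distinct_iff[OF mset_leaves_spine] by blast

lemma set_leaves_spine: "set (leaves U) = insert (qidx U) (set (spine_leaves U))"
  using arg_cong[where f = set_mset, OF mset_leaves_spine[of U]] by simp

lemma support_spine_circ: "support (concat (map tree_circ (spine U))) \<subseteq> set (spine_leaves U)"
  using support_tree_circ by (fastforce simp: support_concat spine_leaves_def)

lemma length_leaves_spine:
  "H \<in> set (spine (Node b l r)) \<Longrightarrow> length (leaves H) \<le> max (length (leaves l)) (length (leaves r))"
proof -
  have "length (leaves H) \<le> length (leaves U)" if "H \<in> set (spine U)" for H U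
    using that by (induction U rule: spine.induct) auto
  then show "H \<in> set (spine (Node b l r)) \<Longrightarrow> ?thesis"
    by (cases b) fastforce+
qed

lemma tree_circ_spine_decomposition:
  "distinct (leaves U) \<Longrightarrow>
   apply_circ (tree_circ U) =
     apply_circ (concat (map tree_circ (spine U)) @ fanin (qidx U) (spine_leaves U))"
proof (induction U)
  case (Leaf a)
  show ?case by (simp add: fanin_def)
next
  case (Node b l r)
  let ?c = "main_child b l r" and ?s = "side_child b l r"
  let ?qc = "qidx ?c" and ?qs = "qidx ?s" and ?A = "spine_leaves ?c"
  let ?H = "concat (map tree_circ (spine ?c))"
  have dc: "distinct (leaves ?c)" and ds: "distinct (leaves ?s)"
    and disj: "set (leaves ?c) \<inter> set (leaves ?s) = {}"
    using Node.prems distinct_leaves_Node by blast+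
  have IH: "apply_circ (tree_circ ?c) = apply_circ (?H @ fanin ?qc ?A)"
    using Node.IH dc by (cases b) (simp_all del: apply_circ_append)
  have qc_A: "?qc \<notin> set ?A" using distinct_qidx_spine_leaves[OF dc] by simp
  have qc_s: "?qc \<notin> set (leaves ?s)" using qidx_in_leaves[of ?c] disj by auto
  have qc_H: "?qc \<notin> support ?H" using qc_A support_spine_circ[of ?c] by auto
  have qc_sc: "?qc \<notin> support (tree_circ ?s)" using qc_s support_tree_circ[of ?s] by auto
  have qs_H: "?qs \<notin> support ?H"
    using qidx_in_leaves[of ?s] support_spine_circ[of ?c] set_leaves_spine[of ?c] disj by auto
  have H_s: "support ?H \<inter> support (tree_circ ?s) = {}"
    using support_spine_circ[of ?c] set_leaves_spine[of ?c] support_tree_circ[of ?s] disj by auto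
  show ?case
  proof
    fix x :: "nat \<Rightarrow> bit"
    define x' where "x' = x(?qc := x ?qc + sum_list (map x ?A))"
    define z where "z = apply_circ (tree_circ ?s) x'"
    have z_qs: "z ?qs = sum_list (map x (leaves ?s))"
      using ds qc_s by (simp add: z_def x'_def apply_circ_tree_circ_qidx map_fun_upd)
    have z_qc: "z ?qc = x ?qc + sum_list (map x ?A)"
      using qc_sc by (simp add: z_def x'_def apply_circ_outside)
    have "apply_circ (tree_circ (Node b l r)) x =
        cnot (?qs, ?qc) (apply_circ (tree_circ ?s) (apply_circ (tree_circ ?c) x))"
      by (rule apply_circ_tree_circ_Node[OF Node.prems])
    also have "\<dots> = cnot (?qs, ?qc) (apply_circ ?H z)"
      using qc_A H_s
      by (simp add: IH apply_circ_fanin apply_circ_commute z_def x'_def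
          del: cnot.simps)
    also have "\<dots> = apply_circ ?H (z(?qc := z ?qc + z ?qs))"
      using qc_H qs_H by (simp add: apply_circ_outside apply_circ_upd)
    also have "z(?qc := z ?qc + z ?qs) =
        apply_circ (tree_circ ?s) (x(?qc := x ?qc + sum_list (map x (leaves ?s @ ?A))))"
      unfolding z_qc z_qs unfolding z_def x'_def using qc_sc by (simp add: apply_circ_upd add_ac)
    also have "apply_circ ?H \<dots> =
        apply_circ (concat (map tree_circ (spine (Node b l r))) @
          fanin (qidx (Node b l r)) (spine_leaves (Node b l r))) x"
      using qc_A qc_s
      by (simp add: spine_Node spine_leaves_Node qidx_Node apply_circ_fanin
          apply_circ_commute[OF H_s])
    finally show "apply_circ (tree_circ (Node b l r)) x = \<dots>" .
  qed
qed

fun heavy_subtree :: "nat \<Rightarrow> ctree \<Rightarrow> ctree" where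
  "heavy_subtree k (Leaf a) = Leaf a"
| "heavy_subtree k (Node b l r) =
     (if k < length (leaves l) then heavy_subtree k l
      else if k < length (leaves r) then heavy_subtree k r else Node b l r)"

fun contract_heavy :: "nat \<Rightarrow> ctree \<Rightarrow> ctree" where
  "contract_heavy k (Leaf a) = Leaf a"
| "contract_heavy k (Node b l r) =
     (if k < length (leaves l) then Node b (contract_heavy k l) r
      else if k < length (leaves r) then Node b l (contract_heavy k r)
      else Leaf (qidx (Node b l r)))"

lemma qidx_contract_heavy: "qidx (contract_heavy k T) = qidx T"
proof (induction k T rule: contract_heavy.induct)
  case (2 k b l r)
  then show ?case by (cases b) auto
qed simp

lemma leaves_contract_heavy:
  "\<exists>pre post. leaves T = pre @ leaves (heavy_subtree k T) @ post \<and>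
     leaves (contract_heavy k T) = pre @ [qidx (heavy_subtree k T)] @ post"
proof (induction k T rule: contract_heavy.induct)
  case (1 k a)
  show ?case by auto
next
  case (2 k b l r)
  consider "k < length (leaves l)" | "\<not> k < length (leaves l)" "k < length (leaves r)"
    | "\<not> k < length (leaves l)" "\<not> k < length (leaves r)" by blast
  then show ?case
  proof cases
    case 1
    with "2.IH"(1) obtain pre post where "leaves l = pre @ leaves (heavy_subtree k l) @ post"
      "leaves (contract_heavy k l) = pre @ [qidx (heavy_subtree k l)] @ post" by blast
    with 1 show ?thesis by (intro exI[of _ pre] exI[of _ "post @ leaves r"]) auto
  next
    case 2
    with "2.IH"(2) obtain pre post where "leaves r = pre @ leaves (heavy_subtree k r) @ post"
      "leaves (contract_heavy k r) = pre @ [qidx (heavy_subtree k r)] @ post" by blast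
    with 2 show ?thesis by (intro exI[of _ "leaves l @ pre"] exI[of _ post]) auto
  next
    case 3
    then show ?thesis by (intro exI[of _ "[]"] exI[of _ "[]"]) auto
  qed
qed

lemma heavy_subtree_size:
  "k < length (leaves T) \<Longrightarrow> k < length (leaves (heavy_subtree k T)) \<and>
     (\<forall>b l r. heavy_subtree k T = Node b l r \<longrightarrow> length (leaves l) \<le> k \<and> length (leaves r) \<le> k)"
  by (induction k T rule: heavy_subtree.induct) auto

lemma tree_circ_contract_heavy:
  "distinct (leaves T) \<Longrightarrow>
   apply_circ (tree_circ T) =
     apply_circ (tree_circ (contract_heavy k T) @ tree_circ (heavy_subtree k T))"
proof (induction k T rule: contract_heavy.induct)
  case (1 k a)
  show ?case by simp
next
  case (2 k b l r)
  have dl: "distinct (leaves l)" "distinct (leaves r)" "set (leaves l) \<inter> set (leaves r) = {}"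
    using "2.prems" by auto
  show ?case
  proof (cases "k < length (leaves l)")
    case True
    then show ?thesis
      using "2.IH"(1)[OF True dl(1)] by (cases b) (simp_all add: qidx_contract_heavy)
  next
    case False
    show ?thesis
    proof (cases "k < length (leaves r)")
      case True
      obtain pre post where "leaves r = pre @ leaves (heavy_subtree k r) @ post"
        using leaves_contract_heavy by blast
      then have "support (tree_circ (heavy_subtree k r)) \<inter> support (tree_circ l) = {}"
        using support_tree_circ[of "heavy_subtree k r"] support_tree_circ[of l] dl(3) by auto
      then show ?thesis using False True "2.IH"(2)[OF False True dl(2)]
        by (cases b) (simp_all add: qidx_contract_heavy apply_circ_commute)
    qed (use False in simp)
  qed
qed

lemma tree_circ_heavy_decomposition:
  assumes "distinct (leaves T)"
  shows "apply_circ (tree_circ T) =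
    apply_circ (concat (map tree_circ (contract_heavy k T # spine (heavy_subtree k T))) @
      fanin (qidx (heavy_subtree k T)) (spine_leaves (heavy_subtree k T)))"
proof -
  obtain pre post where "leaves T = pre @ leaves (heavy_subtree k T) @ post"
    using leaves_contract_heavy by blast
  with assms have "distinct (leaves (heavy_subtree k T))" by simp
  then show ?thesis
    using tree_circ_contract_heavy[OF assms, of k] tree_circ_spine_decomposition
    by (simp add: fun_eq_iff)
qed

lemma mset_leaves_heavy_decomposition:
  "mset (concat (map leaves (contract_heavy k T # spine (heavy_subtree k T)))) = mset (leaves T)"
proof -
  obtain pre post where "leaves T = pre @ leaves (heavy_subtree k T) @ post"
    "leaves (contract_heavy k T) = pre @ [qidx (heavy_subtree k T)] @ post"
    using leaves_contract_heavy by blast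
  then show ?thesis using mset_leaves_spine[of "heavy_subtree k T"] by (simp add: spine_leaves_def)
qed

lemma length_leaves_heavy_decomposition:
  assumes "k < length (leaves T)" "length (leaves T) \<le> 2 * k"
    and "H \<in> set (contract_heavy k T # spine (heavy_subtree k T))"
  shows "length (leaves H) \<le> k"
proof -
  let ?u = "heavy_subtree k T"
  have u: "k < length (leaves ?u)"
    and children: "\<And>b l r. ?u = Node b l r \<Longrightarrow> length (leaves l) \<le> k \<and> length (leaves r) \<le> k"
    using heavy_subtree_size[OF assms(1)] by auto
  from assms(3) consider "H = contract_heavy k T" | "H \<in> set (spine ?u)" by auto
  then show ?thesis
  proof cases
    case 1
    obtain pre post where "leaves T = pre @ leaves ?u @ post"
      "leaves (contract_heavy k T) = pre @ [qidx ?u] @ post"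
      using leaves_contract_heavy by blast
    with 1 u assms(2) show ?thesis by simp
  next
    case 2
    then show ?thesis
      using children length_leaves_spine by (cases ?u) fastforce+
  qed
qed

lemma schedule_forest:
  assumes "distinct (concat (map leaves Ts))"
    and "\<And>T. T \<in> set Ts \<Longrightarrow> \<exists>Ls. schedule (set (leaves T)) Ls (tree_circ T) \<and> length Ls \<le> d"
  shows "\<exists>Ls. schedule (set (concat (map leaves Ts))) Ls (concat (map tree_circ Ts)) \<and>
    length Ls \<le> d"
  using assms
proof (induction Ts)
  case Nil
  show ?case by (intro exI[of _ "[]"]) (simp add: schedule_def)
next
  case (Cons T Ts)
  obtain Ys where "schedule (set (leaves T)) Ys (tree_circ T)" "length Ys \<le> d"
    using Cons.prems(2) by auto
  moreover obtain Zs where "schedule (set (concat (map leaves Ts))) Zs (concat (map tree_circ Ts))"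
    "length Zs \<le> d"
    using Cons by auto
  moreover have "set (leaves T) \<inter> set (concat (map leaves Ts)) = {}"
    using Cons.prems(1) by auto
  ultimately show ?case
    by (intro exI[of _ "merge_layers Ys Zs"])
      (auto simp: length_merge_layers dest: schedule_merge_layers)
qed

section \<open>Polylogarithmic depth\<close>

lemma schedule_tree_step:
  assumes IH: "\<And>T. distinct (leaves T) \<Longrightarrow> length (leaves T) \<le> 2 ^ p \<Longrightarrow>
      \<exists>Ls. schedule (set (leaves T)) Ls (tree_circ T) \<and> length Ls \<le> d"
    and T: "distinct (leaves T)" "2 ^ p < length (leaves T)" "length (leaves T) \<le> 2 ^ Suc p"
  shows "\<exists>Ls. schedule (set (leaves T)) Ls (tree_circ T) \<and> length Ls \<le> d + (2 * p + 3)"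
proof -
  define u where "u = heavy_subtree (2 ^ p) T"
  define Fs where "Fs = contract_heavy (2 ^ p) T # spine u"
  obtain pre post where T_u: "leaves T = pre @ leaves u @ post"
    using leaves_contract_heavy unfolding u_def by blast
  have mset_Fs: "mset (concat (map leaves Fs)) = mset (leaves T)"
    unfolding Fs_def u_def by (rule mset_leaves_heavy_decomposition)
  then have dist_Fs: "distinct (concat (map leaves Fs))"
    and set_Fs: "set (concat (map leaves Fs)) = set (leaves T)"
    using T(1) mset_eq_imp_distinct_iff[OF mset_Fs] mset_eq_setD[OF mset_Fs] by auto
  have "\<exists>Ls. schedule (set (leaves H)) Ls (tree_circ H) \<and> length Ls \<le> d" if "H \<in> set Fs" for H
  proof (rule IH)
    show "distinct (leaves H)" using dist_Fs that by (auto simp: distinct_concat_iff)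
    show "length (leaves H) \<le> 2 ^ p"
      using length_leaves_heavy_decomposition[of "2 ^ p" T H] T that by (simp add: Fs_def u_def)
  qed
  then obtain Ys
    where Ys: "schedule (set (leaves T)) Ys (concat (map tree_circ Fs))" "length Ys \<le> d"
    using schedule_forest[OF dist_Fs] set_Fs by metis
  have "distinct (qidx u # spine_leaves u)"
    using T(1) T_u distinct_qidx_spine_leaves by simp
  then have "schedule (insert (qidx u) (set (spine_leaves u)))
      (fanin_layers (qidx u) (spine_leaves u)) (fanin (qidx u) (spine_leaves u))"
    by (simp add: schedule_fanin_layers)
  moreover have "insert (qidx u) (set (spine_leaves u)) \<subseteq> set (leaves T)"
    using T_u set_leaves_spine[of u] by auto
  ultimately have Zs: "schedule (set (leaves T)) (fanin_layers (qidx u) (spine_leaves u))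
      (fanin (qidx u) (spine_leaves u))"
    by (rule schedule_mono)
  have "length (spine_leaves u) \<le> 2 ^ Suc p"
    using T_u T(3) arg_cong[where f = size, OF mset_leaves_spine[of u]] by simp
  from length_fanin_layers[OF this, of "qidx u"]
  have "length (fanin_layers (qidx u) (spine_leaves u)) \<le> 2 * p + 3" by simp
  moreover have
    "schedule (set (leaves T)) (Ys @ fanin_layers (qidx u) (spine_leaves u)) (tree_circ T)"
    using schedule_append[OF Ys(1) Zs] tree_circ_heavy_decomposition[OF T(1), of "2 ^ p"]
    by (simp add: schedule_def Fs_def u_def)
  ultimately show ?thesis using Ys(2) by (intro exI) auto
qed

lemma schedule_tree:
  "distinct (leaves T) \<Longrightarrow> length (leaves T) \<le> 2 ^ p \<Longrightarrow>
   \<exists>Ls. schedule (set (leaves T)) Ls (tree_circ T) \<and> length Ls \<le> 3 * p\<^sup>2"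
proof (induction p arbitrary: T)
  case 0
  obtain a where "T = Leaf a"
  proof (cases T)
    case (Node b l r)
    with "0.prems"(2) show ?thesis using length_leaves_pos[of l] length_leaves_pos[of r] by simp
  qed
  then show ?case by (intro exI[of _ "[]"]) (simp add: schedule_def)
next
  case (Suc p)
  show ?case
  proof (cases "length (leaves T) \<le> 2 ^ p")
    case True
    with Suc.IH Suc.prems obtain Ls
      where "schedule (set (leaves T)) Ls (tree_circ T)" "length Ls \<le> 3 * p\<^sup>2"
      by blast
    then show ?thesis by (intro exI[of _ Ls]) (auto simp: power2_eq_square)
  next
    case False
    with Suc schedule_tree_step[of p "3 * p\<^sup>2" T] obtain Ls
      where "schedule (set (leaves T)) Ls (tree_circ T)" "length Ls \<le> 3 * p\<^sup>2 + (2 * p + 3)"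
      by fastforce
    then show ?thesis by (intro exI[of _ Ls]) (auto simp: power2_eq_square)
  qed
qed

lemma ceillog2_depth_bound:
  assumes "2 \<le> n"
  shows "real (3 * (ceillog2 n)\<^sup>2) \<le> 12 / (ln 2)\<^sup>2 * (ln (real n))\<^sup>2"
proof -
  have "1 \<le> log 2 (real n)" using assms by simp
  moreover have "real (ceillog2 n) < log 2 (real n) + 1"
    using assms by (intro ceillog2_less_log) simp
  ultimately have "real (ceillog2 n) \<le> 2 * log 2 (real n)" by linarith
  then have "real (ceillog2 n) \<le> 2 * (ln (real n) / ln 2)" by (simp add: log_def)
  then have "(real (ceillog2 n))\<^sup>2 \<le> (2 * (ln (real n) / ln 2))\<^sup>2" by (rule power_mono) simp
  then show ?thesis by (simp add: power_divide power_mult_distrib)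
qed

theorem theorem3p5:
  "\<exists>C :: real. C > 0 \<and>
     (\<forall>n :: nat. \<forall>T. n \<ge> 2 \<longrightarrow> cnot_tree n T \<longrightarrow>
        (\<exists>Ms :: bit mat list.
           real (length Ms) \<le> C * (ln (real n))\<^sup>2 \<and>
           (\<forall>M \<in> set Ms. par_elim n M) \<and>
           tree_mat n T = foldr (*) Ms (1\<^sub>m n)))"
proof (intro exI[of _ "12 / (ln 2)\<^sup>2"] conjI allI impI)
  fix n :: nat and T
  assume n: "2 \<le> n" and "cnot_tree n T"
  then have T: "distinct (leaves T)" "length (leaves T) = n" "set (leaves T) \<subseteq> {1..n}"
    by (auto simp: cnot_tree_def)
  then obtain Ls
    where Ls: "schedule (set (leaves T)) Ls (tree_circ T)" "length Ls \<le> 3 * (ceillog2 n)\<^sup>2"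
    using schedule_tree le_two_power_ceillog2 by metis
  have "schedule {1..n} Ls (tree_circ T)" "support (tree_circ T) \<subseteq> {1..n}"
    using schedule_mono[OF Ls(1) T(3)] support_tree_circ[of T] T(3) by auto
  note factorization = schedule_par_elim_factorization[OF this]
  show "\<exists>Ms. real (length Ms) \<le> 12 / (ln 2)\<^sup>2 * (ln (real n))\<^sup>2 \<and>
      (\<forall>M \<in> set Ms. par_elim n M) \<and> tree_mat n T = foldr (*) Ms (1\<^sub>m n)"
  proof (intro exI conjI)
    have "real (length Ls) \<le> real (3 * (ceillog2 n)\<^sup>2)" using Ls(2) by (simp only: of_nat_le_iff)
    also have "\<dots> \<le> 12 / (ln 2)\<^sup>2 * (ln (real n))\<^sup>2" by (rule ceillog2_depth_bound[OF n])
    finally show "real (length (map (circ_mat n) Ls)) \<le> 12 / (ln 2)\<^sup>2 * (ln (real n))\<^sup>2" by simp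
  qed (use factorization in \<open>simp_all add: tree_mat_eq_circ_mat\<close>)
qed simp

end
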